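(* Let $\mathcal{H}=\mathbb{C}^{d_1}$, $\mathcal{K}=\mathbb{C}^{d_2}$ with $d_1\ge3$ odd, and let $\sigma_1,\dots,\sigma_{d_1d_2}\ge0$ be given. Consider the problem of minimizing $\frac1{d_1d_2}\operatorname{tr}[A\,\overline A^{T_2}]$ over all $A\in\mathcal{B}(\mathcal{H}\otimes\mathcal{K})$ with $A^T=A$ and singular values $\sigma_1,\dots,\sigma_{d_1d_2}$. Then every local minimizer $A$ of this problem satisfies that $A\,\overline A^{T_2}$ is Hermitian.
   Context: The partial transposes are taken with respect to a fixed product basis, defined by linear extension of $(X\otimes Y)^{T_1}=X^T\otimes Y$ and $(X\otimes Y)^{T_2}=X\otimes Y^T$; $\overline A$ is the entrywise complex conjugate, and $\overline A^{T_2}=(\overline A)^{T_2}$. *)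

theory Defs
  imports "Jordan_Normal_Form.Matrix" "Jordan_Normal_Form.Char_Poly"
begin

text \<open>Matrices on C^d1 (x) C^d2 are d1*d2 x d1*d2 complex matrices; the product
basis vector e_i (x) f_j (i < d1, j < d2) has index i*d2 + j.\<close>

definition cmtrace :: "complex mat \<Rightarrow> complex" where
  "cmtrace A = (\<Sum>i<dim_row A. A $$ (i, i))"

definition conj_mat :: "complex mat \<Rightarrow> complex mat" where
  "conj_mat A = map_mat cnj A"

definition adjoint_cmat :: "complex mat \<Rightarrow> complex mat" where
  "adjoint_cmat A = conj_mat (transpose_mat A)"

definition hermitian_cmat :: "complex mat \<Rightarrow> bool" where
  "hermitian_cmat A \<longleftrightarrow> adjoint_cmat A = A"

text \<open>Partial transpose on the second factor: (X (x) Y)^T2 = X (x) Y^T, i.e.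
  A^T2_{(i,j),(i',j')} = A_{(i,j'),(i',j)}.\<close>
definition ptrans2 :: "nat \<Rightarrow> nat \<Rightarrow> complex mat \<Rightarrow> complex mat" where
  "ptrans2 d1 d2 A = mat (d1 * d2) (d1 * d2)
     (\<lambda>(r, c). A $$ ((r div d2) * d2 + c mod d2, (c div d2) * d2 + r mod d2))"

text \<open>The singular values of an n x n matrix A (with multiplicity) are the
  nonnegative square roots of the eigenvalues of A^* A (with algebraic multiplicity).
  So A has singular values sigma_0..sigma_{n-1} (all >= 0) iff the characteristic
  polynomial of A^* A is prod_k (x - sigma_k^2).\<close>
definition has_singular_values :: "nat \<Rightarrow> complex mat \<Rightarrow> (nat \<Rightarrow> real) \<Rightarrow> bool" where
  "has_singular_values n A \<sigma> \<longleftrightarrow> A \<in> carrier_mat n n \<and> (\<forall>k<n. \<sigma> k \<ge> 0) \<and>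
     char_poly (adjoint_cmat A * A) = (\<Prod>k<n. [: - complex_of_real ((\<sigma> k)\<^sup>2), 1 :])"

definition feasible :: "nat \<Rightarrow> nat \<Rightarrow> (nat \<Rightarrow> real) \<Rightarrow> complex mat \<Rightarrow> bool" where
  "feasible d1 d2 \<sigma> A \<longleftrightarrow> A \<in> carrier_mat (d1 * d2) (d1 * d2) \<and> transpose_mat A = A \<and>
     has_singular_values (d1 * d2) A \<sigma>"

text \<open>Objective (1/(d1 d2)) tr[A conj(A)^T2]; it is real on the feasible set, we take its real part.\<close>
definition objective :: "nat \<Rightarrow> nat \<Rightarrow> complex mat \<Rightarrow> real" where
  "objective d1 d2 A = Re (cmtrace (A * ptrans2 d1 d2 (conj_mat A))) / real (d1 * d2)"

definition mat_dist :: "complex mat \<Rightarrow> complex mat \<Rightarrow> real" where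
  "mat_dist A B = sqrt (\<Sum>i<dim_row A. \<Sum>j<dim_col A. (cmod (A $$ (i, j) - B $$ (i, j)))\<^sup>2)"

definition local_minimizer :: "nat \<Rightarrow> nat \<Rightarrow> (nat \<Rightarrow> real) \<Rightarrow> complex mat \<Rightarrow> bool" where
  "local_minimizer d1 d2 \<sigma> A \<longleftrightarrow> feasible d1 d2 \<sigma> A \<and>
     (\<exists>\<epsilon>>0. \<forall>B. feasible d1 d2 \<sigma> B \<and> mat_dist A B < \<epsilon> \<longrightarrow>
        objective d1 d2 A \<le> objective d1 d2 B)"

end

theory Submission
  imports Defs
begin

text \<open>
  For a Hermitian projection \<open>P\<close> and a point \<open>1 + u\<close> of the unit circle, \<open>U = 1 + u P\<close> is
  unitary, and \<open>A \<mapsto> U A U\<^sup>T\<close> preserves both the symmetry \<open>A\<^sup>T = A\<close> and the singular values.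
  Along the curve \<open>1 + u(t) = (1 + i t) / (1 - i t)\<close> the objective at \<open>U A U\<^sup>T\<close> differs from
  its value at \<open>A\<close> by \<open>-8 t Im tr(P M) / (d\<^sub>1 d\<^sub>2) + O(t\<^sup>2)\<close>, where \<open>M = A conj(A)\<^sup>T\<^sup>2\<close>.
  At a local minimiser the linear term must vanish, so \<open>tr(P M)\<close> is real for every
  projection \<open>P\<close>; for rank-one projections this says that \<open>v\<^sup>* M v\<close> is real for every
  vector \<open>v\<close>, i.e. \<open>M\<close> is Hermitian. None of the assumptions on \<open>d\<^sub>1\<close>, \<open>d\<^sub>2\<close> and \<open>\<sigma>\<close>
  is needed.
\<close>

lemma conj_mat_carrier_iff [simp]: "conj_mat X \<in> carrier_mat n m \<longleftrightarrow> X \<in> carrier_mat n m"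
  unfolding conj_mat_def by (rule map_carrier_mat)

lemma dim_conj_mat [simp]: "dim_row (conj_mat X) = dim_row X" "dim_col (conj_mat X) = dim_col X"
  by (simp_all add: conj_mat_def)

lemma index_conj_mat [simp]:
  "i < dim_row X \<Longrightarrow> j < dim_col X \<Longrightarrow> conj_mat X $$ (i, j) = cnj (X $$ (i, j))"
  by (simp add: conj_mat_def)

lemma conj_mat_mult:
  assumes "X \<in> carrier_mat n k" "Y \<in> carrier_mat k m"
  shows "conj_mat (X * Y) = conj_mat X * conj_mat Y"
  by (rule eq_matI) (use assms in \<open>auto simp: scalar_prod_def\<close>)

lemma conj_mat_transpose: "conj_mat (transpose_mat X) = transpose_mat (conj_mat X)"
  by (rule eq_matI) auto

lemma adjoint_cmat_carrier [simp]: "X \<in> carrier_mat n m \<Longrightarrow> adjoint_cmat X \<in> carrier_mat m n"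
  by (simp add: adjoint_cmat_def)

lemma cmtrace_add:
  assumes "X \<in> carrier_mat n n" "Y \<in> carrier_mat n n"
  shows "cmtrace (X + Y) = cmtrace X + cmtrace Y"
  unfolding cmtrace_def using assms by (simp add: sum.distrib)

lemma cmtrace_mult_commute:
  assumes "X \<in> carrier_mat n n" "Y \<in> carrier_mat n n"
  shows "cmtrace (X * Y) = cmtrace (Y * X)"
proof -
  have "cmtrace (X * Y) = (\<Sum>i<n. \<Sum>k<n. X $$ (i, k) * Y $$ (k, i))"
    unfolding cmtrace_def using assms by (simp add: scalar_prod_def atLeast0LessThan)
  also have "\<dots> = (\<Sum>k<n. \<Sum>i<n. Y $$ (k, i) * X $$ (i, k))"
    by (subst sum.swap) (simp add: mult.commute)
  also have "\<dots> = cmtrace (Y * X)"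
    unfolding cmtrace_def using assms by (simp add: scalar_prod_def atLeast0LessThan)
  finally show ?thesis .
qed

lemma cmtrace_transpose: "X \<in> carrier_mat n n \<Longrightarrow> cmtrace (transpose_mat X) = cmtrace X"
  unfolding cmtrace_def by simp

section \<open>The sesquilinear form behind the objective\<close>

definition ptrans2_form :: "nat \<Rightarrow> nat \<Rightarrow> complex mat \<Rightarrow> complex mat \<Rightarrow> complex" where
  "ptrans2_form d1 d2 X Y = cmtrace (X * ptrans2 d1 d2 (conj_mat Y))"

lemma objective_eq_ptrans2_form:
  "objective d1 d2 A = Re (ptrans2_form d1 d2 A A) / real (d1 * d2)"
  unfolding objective_def ptrans2_form_def ..

text \<open>Exchanges the second tensor coordinates of a row and a column index:
  \<open>tr[X conj(Y)\<^sup>T\<^sup>2] = \<Sum> X\<^sub>r\<^sub>c conj(Y\<^bsub>ptrans2_index (r, c)\<^esub>)\<close>.\<close>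
definition ptrans2_index :: "nat \<Rightarrow> nat \<times> nat \<Rightarrow> nat \<times> nat" where
  "ptrans2_index d2 = (\<lambda>(r, c). ((c div d2) * d2 + r mod d2, (r div d2) * d2 + c mod d2))"

lemma block_index_less:
  fixes a c d1 d2 :: nat
  assumes "a < d1 * d2" "c < d1 * d2"
  shows "(a div d2) * d2 + c mod d2 < d1 * d2"
proof -
  have "a div d2 < d1" using assms(1) by (simp add: less_mult_imp_div_less)
  then have "(a div d2 + 1) * d2 \<le> d1 * d2" by (intro mult_right_mono) simp_all
  moreover have "c mod d2 < d2" using assms(2) by (cases "d2 = 0") simp_all
  ultimately show ?thesis by simp
qed

lemma ptrans2_index_involution: "ptrans2_index d2 (ptrans2_index d2 rc) = rc"
  by (cases rc; cases "d2 = 0") (simp_all add: ptrans2_index_def)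

lemma ptrans2_index_in:
  "rc \<in> {..<d1 * d2} \<times> {..<d1 * d2} \<Longrightarrow> ptrans2_index d2 rc \<in> {..<d1 * d2} \<times> {..<d1 * d2}"
  by (cases rc) (auto simp: ptrans2_index_def block_index_less)

lemma ptrans2_carrier: "ptrans2 d1 d2 X \<in> carrier_mat (d1 * d2) (d1 * d2)"
  by (simp add: ptrans2_def)

lemma transpose_ptrans2:
  assumes "X \<in> carrier_mat (d1 * d2) (d1 * d2)"
  shows "transpose_mat (ptrans2 d1 d2 X) = ptrans2 d1 d2 (transpose_mat X)"
  by (rule eq_matI) (use assms in \<open>auto simp: ptrans2_def block_index_less\<close>)

lemma ptrans2_form_eq_sum:
  assumes "X \<in> carrier_mat (d1 * d2) (d1 * d2)" "Y \<in> carrier_mat (d1 * d2) (d1 * d2)"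
  shows "ptrans2_form d1 d2 X Y =
    (\<Sum>r<d1 * d2. \<Sum>c<d1 * d2. X $$ (r, c) * cnj (Y $$ ptrans2_index d2 (r, c)))"
proof -
  have "(X * ptrans2 d1 d2 (conj_mat Y)) $$ (r, r) =
      (\<Sum>c<d1 * d2. X $$ (r, c) * cnj (Y $$ ptrans2_index d2 (r, c)))" if "r < d1 * d2" for r
    using that assms
    by (auto simp: ptrans2_def ptrans2_index_def scalar_prod_def atLeast0LessThan block_index_less
        intro!: sum.cong)
  then show ?thesis unfolding ptrans2_form_def cmtrace_def using assms(1) by simp
qed

lemma ptrans2_form_swap:
  assumes X: "X \<in> carrier_mat (d1 * d2) (d1 * d2)" and Y: "Y \<in> carrier_mat (d1 * d2) (d1 * d2)"
  shows "ptrans2_form d1 d2 X Y = cnj (ptrans2_form d1 d2 Y X)"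
proof -
  let ?S = "{..<d1 * d2} \<times> {..<d1 * d2}"
  have "ptrans2_form d1 d2 X Y = (\<Sum>rc\<in>?S. X $$ rc * cnj (Y $$ ptrans2_index d2 rc))"
    unfolding ptrans2_form_eq_sum[OF X Y] sum.cartesian_product by simp
  also have "\<dots> = (\<Sum>rc\<in>?S. X $$ ptrans2_index d2 rc * cnj (Y $$ rc))"
    by (rule sum.reindex_bij_witness[of _ "ptrans2_index d2" "ptrans2_index d2"])
      (auto simp: ptrans2_index_involution ptrans2_index_in)
  also have "\<dots> = cnj (ptrans2_form d1 d2 Y X)"
    unfolding ptrans2_form_eq_sum[OF Y X] sum.cartesian_product by (simp add: mult.commute)
  finally show ?thesis .
qed

lemma ptrans2_form_add_left:
  assumes "X1 \<in> carrier_mat (d1 * d2) (d1 * d2)" "X2 \<in> carrier_mat (d1 * d2) (d1 * d2)"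
    and "Y \<in> carrier_mat (d1 * d2) (d1 * d2)"
  shows "ptrans2_form d1 d2 (X1 + X2) Y = ptrans2_form d1 d2 X1 Y + ptrans2_form d1 d2 X2 Y"
  using assms by (simp add: ptrans2_form_eq_sum sum.distrib[symmetric] distrib_right)

lemma ptrans2_form_smult_left:
  assumes "X \<in> carrier_mat (d1 * d2) (d1 * d2)" "Y \<in> carrier_mat (d1 * d2) (d1 * d2)"
  shows "ptrans2_form d1 d2 (c \<cdot>\<^sub>m X) Y = c * ptrans2_form d1 d2 X Y"
  using assms by (simp add: ptrans2_form_eq_sum sum_distrib_left mult.assoc)

lemma ptrans2_form_add_right:
  assumes "X \<in> carrier_mat (d1 * d2) (d1 * d2)" "Y1 \<in> carrier_mat (d1 * d2) (d1 * d2)"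
    and "Y2 \<in> carrier_mat (d1 * d2) (d1 * d2)"
  shows "ptrans2_form d1 d2 X (Y1 + Y2) = ptrans2_form d1 d2 X Y1 + ptrans2_form d1 d2 X Y2"
  using assms by (simp add: ptrans2_form_swap[of X] ptrans2_form_add_left)

lemma ptrans2_form_smult_right:
  assumes "X \<in> carrier_mat (d1 * d2) (d1 * d2)" "Y \<in> carrier_mat (d1 * d2) (d1 * d2)"
  shows "ptrans2_form d1 d2 X (c \<cdot>\<^sub>m Y) = cnj c * ptrans2_form d1 d2 X Y"
  using assms by (simp add: ptrans2_form_swap[of X] ptrans2_form_smult_left)

lemma Re_ptrans2_form_add_self:
  assumes "A \<in> carrier_mat (d1 * d2) (d1 * d2)" "D \<in> carrier_mat (d1 * d2) (d1 * d2)"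
  shows "Re (ptrans2_form d1 d2 (A + D) (A + D)) =
    Re (ptrans2_form d1 d2 A A) + 2 * Re (ptrans2_form d1 d2 D A) + Re (ptrans2_form d1 d2 D D)"
  using assms
  by (simp add: ptrans2_form_add_left ptrans2_form_add_right ptrans2_form_swap[where X = A and Y = D])

lemma Re_ptrans2_form_perturbation:
  fixes A E F :: "complex mat"
  assumes A: "A \<in> carrier_mat (d1 * d2) (d1 * d2)" and E: "E \<in> carrier_mat (d1 * d2) (d1 * d2)"
    and F: "F \<in> carrier_mat (d1 * d2) (d1 * d2)"
  defines "Q \<equiv> ptrans2_form d1 d2"
  shows "Re (Q (A + u \<cdot>\<^sub>m (E + u \<cdot>\<^sub>m F)) (A + u \<cdot>\<^sub>m (E + u \<cdot>\<^sub>m F))) - Re (Q A A) - 2 * Re (u * Q E A)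
    = 2 * Re (u * u * Q F A) + (cmod u)\<^sup>2 * Re (Q E E + cnj u * Q E F + u * Q F E + u * cnj u * Q F F)"
proof -
  define D where "D = u \<cdot>\<^sub>m (E + u \<cdot>\<^sub>m F)"
  have D: "D \<in> carrier_mat (d1 * d2) (d1 * d2)" using E F by (simp add: D_def)
  have "Q D A = u * Q E A + u * u * Q F A"
    using A E F by (simp add: Q_def D_def ptrans2_form_add_left ptrans2_form_smult_left algebra_simps)
  moreover have "Q D D = of_real ((cmod u)\<^sup>2) * (Q E E + cnj u * Q E F + u * Q F E + u * cnj u * Q F F)"
    using E F unfolding Q_def D_def complex_norm_square
    by (simp add: ptrans2_form_add_left ptrans2_form_add_right ptrans2_form_smult_left
        ptrans2_form_smult_right algebra_simps)
  ultimately show ?thesis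
    using Re_ptrans2_form_add_self[OF A D] by (simp add: Q_def D_def)
qed

lemma ptrans2_form_second_order:
  fixes A E F :: "complex mat"
  assumes A: "A \<in> carrier_mat (d1 * d2) (d1 * d2)" and E: "E \<in> carrier_mat (d1 * d2) (d1 * d2)"
    and F: "F \<in> carrier_mat (d1 * d2) (d1 * d2)"
  obtains C where "\<And>u. cmod u \<le> 2 \<Longrightarrow>
    \<bar>Re (ptrans2_form d1 d2 (A + u \<cdot>\<^sub>m (E + u \<cdot>\<^sub>m F)) (A + u \<cdot>\<^sub>m (E + u \<cdot>\<^sub>m F)))
      - Re (ptrans2_form d1 d2 A A) - 2 * Re (u * ptrans2_form d1 d2 E A)\<bar> \<le> (cmod u)\<^sup>2 * C"
proof -
  let ?Q = "ptrans2_form d1 d2"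
  define B where "B = cmod (?Q E E) + 2 * cmod (?Q E F) + 2 * cmod (?Q F E) + 4 * cmod (?Q F F)"
  show thesis
  proof (rule that[of "2 * cmod (?Q F A) + B"])
    fix u :: complex assume u: "cmod u \<le> 2"
    define R where "R = ?Q E E + cnj u * ?Q E F + u * ?Q F E + u * cnj u * ?Q F F"
    have "cmod (cnj u * ?Q E F) \<le> 2 * cmod (?Q E F)" "cmod (u * ?Q F E) \<le> 2 * cmod (?Q F E)"
      using u by (simp_all add: norm_mult mult_right_mono)
    moreover have "cmod u * cmod u \<le> 2 * 2" using u by (intro mult_mono) auto
    then have "cmod (u * cnj u * ?Q F F) \<le> 4 * cmod (?Q F F)"
      by (simp add: norm_mult mult_right_mono)
    moreover have "cmod R \<le> cmod (?Q E E) + cmod (cnj u * ?Q E F) + cmod (u * ?Q F E)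
        + cmod (u * cnj u * ?Q F F)"
      unfolding R_def by (meson add_right_mono norm_triangle_ineq order_trans)
    ultimately have "cmod R \<le> B" unfolding B_def by linarith
    then have "(cmod u)\<^sup>2 * \<bar>Re R\<bar> \<le> (cmod u)\<^sup>2 * B"
      using abs_Re_le_cmod[of R] by (intro mult_left_mono) simp_all
    moreover have "\<bar>2 * Re (u * u * ?Q F A)\<bar> \<le> (cmod u)\<^sup>2 * (2 * cmod (?Q F A))"
      using abs_Re_le_cmod[of "u * u * ?Q F A"] by (simp add: norm_mult power2_eq_square)
    ultimately show "\<bar>Re (?Q (A + u \<cdot>\<^sub>m (E + u \<cdot>\<^sub>m F)) (A + u \<cdot>\<^sub>m (E + u \<cdot>\<^sub>m F)))
        - Re (?Q A A) - 2 * Re (u * ?Q E A)\<bar> \<le> (cmod u)\<^sup>2 * (2 * cmod (?Q F A) + B)"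
      unfolding Re_ptrans2_form_perturbation[OF A E F] R_def[symmetric]
      using abs_triangle_ineq[of "2 * Re (u * u * ?Q F A)" "(cmod u)\<^sup>2 * Re R"]
      by (simp add: abs_mult distrib_left)
  qed
qed

text \<open>\<open>1 + cayley_step t = (1 + i t) / (1 - i t)\<close>, so \<open>cayley_step t = 2 i t + O(t\<^sup>2)\<close> and
  \<open>1 + cayley_step t\<close> stays on the unit circle.\<close>
definition cayley_step :: "real \<Rightarrow> complex" where
  "cayley_step t = Complex (- 2 * t\<^sup>2 / (1 + t\<^sup>2)) (2 * t / (1 + t\<^sup>2))"

lemma one_plus_square_pos: "0 < 1 + (t :: real)\<^sup>2"
  by (simp add: add_pos_nonneg)

lemma cmod_cayley_step_squared: "(cmod (cayley_step t))\<^sup>2 = 4 * t\<^sup>2 / (1 + t\<^sup>2)"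
proof -
  have p: "1 + t\<^sup>2 \<noteq> 0" using one_plus_square_pos[of t] by simp
  have "(cmod (cayley_step t))\<^sup>2 = ((- 2 * t\<^sup>2)\<^sup>2 + (2 * t)\<^sup>2) / (1 + t\<^sup>2)\<^sup>2"
    unfolding cayley_step_def cmod_power2 by (simp add: power_divide add_divide_distrib)
  also have "\<dots> = 4 * t\<^sup>2 * (1 + t\<^sup>2) / (1 + t\<^sup>2)\<^sup>2"
    by (simp add: algebra_simps power2_eq_square)
  also have "\<dots> = 4 * t\<^sup>2 / (1 + t\<^sup>2)"
    using p by (simp add: power2_eq_square)
  finally show ?thesis .
qed

lemma cmod_cayley_step_le: "cmod (cayley_step t) \<le> 2 * \<bar>t\<bar>"
proof (rule power2_le_imp_le)
  have "4 * t\<^sup>2 / (1 + t\<^sup>2) \<le> 4 * t\<^sup>2"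
    using one_plus_square_pos[of t] by (simp add: divide_le_eq mult_le_cancel_left1)
  then show "(cmod (cayley_step t))\<^sup>2 \<le> (2 * \<bar>t\<bar>)\<^sup>2"
    by (simp add: cmod_cayley_step_squared power_mult_distrib)
qed simp

lemma cayley_step_unimodular:
  "cayley_step t + cnj (cayley_step t) + cayley_step t * cnj (cayley_step t) = 0"
proof -
  have "cayley_step t * cnj (cayley_step t) = of_real (4 * t\<^sup>2 / (1 + t\<^sup>2))"
    by (simp add: complex_norm_square[symmetric] cmod_cayley_step_squared)
  moreover have "cayley_step t + cnj (cayley_step t) = of_real (- 4 * t\<^sup>2 / (1 + t\<^sup>2))"
    by (simp add: cayley_step_def complex_eq_iff)
  ultimately show ?thesis by simp
qed

lemma Re_cayley_step_mult:
  "(1 + t\<^sup>2) * Re (cayley_step t * z) = - 2 * t\<^sup>2 * Re z - 2 * t * Im z"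
proof -
  have "Re (cayley_step t * z) = (- 2 * t\<^sup>2 * Re z - 2 * t * Im z) / (1 + t\<^sup>2)"
    by (simp add: cayley_step_def diff_divide_distrib)
  then show ?thesis using one_plus_square_pos[of t] by simp
qed

lemma linear_le_quadratic_imp_zero:
  fixes a C d :: real
  assumes d: "0 < d" and le: "\<And>t. \<bar>t\<bar> < d \<Longrightarrow> a * t \<le> C * t\<^sup>2"
  shows "a = 0"
proof -
  have small: "\<bar>a\<bar> \<le> \<bar>C\<bar> * s" if s: "0 < s" "s < d" for s
  proof -
    have "a * s \<le> (C * s) * s" "(- a) * s \<le> (C * s) * s"
      using le[of s] le[of "- s"] s by (simp_all add: power2_eq_square)
    then have "a \<le> C * s" "- a \<le> C * s" using s by (simp_all add: mult_right_le_imp_le)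
    moreover have "C * s \<le> \<bar>C\<bar> * s" using s by (simp add: mult_right_mono)
    ultimately show ?thesis by linarith
  qed
  have "\<bar>a\<bar> \<le> 0 + e" if e: "0 < e" for e
  proof -
    define s where "s = min (d / 2) (e / (\<bar>C\<bar> + 1))"
    have s: "0 < s" "s < d" using d e by (auto simp: s_def)
    have "\<bar>C\<bar> * s \<le> (\<bar>C\<bar> + 1) * (e / (\<bar>C\<bar> + 1))"
      using s by (intro mult_mono) (auto simp: s_def)
    then show ?thesis using small[OF s] by simp
  qed
  then show ?thesis using field_le_epsilon[of "\<bar>a\<bar>" 0] by simp
qed

lemma Im_zero_if_cayley_variation_nonneg:
  fixes z :: complex and K d :: real and g :: "real \<Rightarrow> real"
  assumes d: "0 < d"
    and nonneg: "\<And>t. \<bar>t\<bar> < d \<Longrightarrow> 0 \<le> 2 * Re (cayley_step t * z) + g t"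
    and small: "\<And>t. \<bar>t\<bar> < d \<Longrightarrow> \<bar>g t\<bar> \<le> (cmod (cayley_step t))\<^sup>2 * K"
  shows "Im z = 0"
proof (rule linear_le_quadratic_imp_zero[OF d])
  fix t :: real assume t: "\<bar>t\<bar> < d"
  have p: "0 < 1 + t\<^sup>2" by (rule one_plus_square_pos)
  have "(1 + t\<^sup>2) * g t \<le> (1 + t\<^sup>2) * \<bar>g t\<bar>" using p by (simp add: mult_left_mono)
  also have "\<dots> \<le> 4 * t\<^sup>2 * K"
    using small[OF t] p by (simp add: cmod_cayley_step_squared field_simps)
  finally have g: "(1 + t\<^sup>2) * g t \<le> 4 * t\<^sup>2 * K" .
  have "0 \<le> (1 + t\<^sup>2) * (2 * Re (cayley_step t * z) + g t)"
    using nonneg[OF t] p by simp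
  also have "\<dots> = - 4 * t\<^sup>2 * Re z - 4 * t * Im z + (1 + t\<^sup>2) * g t"
    using Re_cayley_step_mult[of t z] by (simp add: algebra_simps)
  finally show "Im z * t \<le> (K - Re z) * t\<^sup>2"
    using g by (simp add: algebra_simps)
qed

section \<open>Unitary congruences preserve the feasible set\<close>

lemma feasible_unitary_congruence:
  assumes U: "U \<in> carrier_mat (d1 * d2) (d1 * d2)"
    and unitary: "adjoint_cmat U * U = 1\<^sub>m (d1 * d2)" "U * adjoint_cmat U = 1\<^sub>m (d1 * d2)"
    and feasible: "feasible d1 d2 \<sigma> A"
  shows "feasible d1 d2 \<sigma> (U * A * transpose_mat U)"
proof -
  define n where "n = d1 * d2"
  define B where "B = U * A * transpose_mat U"
  have A: "A \<in> carrier_mat n n" and sym: "transpose_mat A = A" and sv: "has_singular_values n A \<sigma>"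
    using feasible by (simp_all add: feasible_def n_def)
  have U: "U \<in> carrier_mat n n" and UU: "adjoint_cmat U * U = 1\<^sub>m n" "U * adjoint_cmat U = 1\<^sub>m n"
    using U unitary by (simp_all add: n_def)
  have B: "B \<in> carrier_mat n n" using A U by (simp add: B_def)
  have adj_U: "adjoint_cmat U = transpose_mat (conj_mat U)"
    by (simp add: adjoint_cmat_def conj_mat_transpose)
  have "transpose_mat B = transpose_mat (transpose_mat U) * transpose_mat (U * A)"
    unfolding B_def using A U by (intro transpose_mult) auto
  also have "\<dots> = B"
    using A U by (simp add: B_def transpose_mult[of U n n A n] sym)
  finally have sym_B: "transpose_mat B = B" .
  have AUT: "A * transpose_mat U \<in> carrier_mat n n" using A U by simp
  have cancel: "adjoint_cmat U * (U * (A * transpose_mat U)) = A * transpose_mat U"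
    using AUT U UU(1)
    by (simp add: left_mult_one_mat[OF AUT] flip: assoc_mult_mat[of _ n n _ n _ n])
  have "adjoint_cmat B = conj_mat B" by (simp add: adjoint_cmat_def sym_B)
  also have "\<dots> = conj_mat U * conj_mat A * adjoint_cmat U"
    using A U by (simp add: B_def conj_mat_mult[of _ n n _ n] adjoint_cmat_def)
  finally have adj_B: "adjoint_cmat B = conj_mat U * conj_mat A * adjoint_cmat U" .
  have adj_A: "adjoint_cmat A = conj_mat A" by (simp add: adjoint_cmat_def sym)
  have "adjoint_cmat B * B = conj_mat U * (adjoint_cmat A * A) * transpose_mat U"
    unfolding adj_B using A U by (simp add: adj_A B_def cancel assoc_mult_mat[of _ n n _ n _ n])
  moreover have "conj_mat U * transpose_mat U = 1\<^sub>m n"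
    using arg_cong[OF UU(2), of transpose_mat] U by (simp add: adj_U transpose_mult[of _ n n])
  moreover have "transpose_mat U * conj_mat U = 1\<^sub>m n"
    using arg_cong[OF UU(1), of transpose_mat] U by (simp add: adj_U transpose_mult[of _ n n])
  ultimately have
    "similar_mat_wit (adjoint_cmat B * B) (adjoint_cmat A * A) (conj_mat U) (transpose_mat U)"
    using A U B mult_carrier_mat[OF adjoint_cmat_carrier[OF A] A] by (intro similar_mat_witI) auto
  then have "similar_mat (adjoint_cmat B * B) (adjoint_cmat A * A)"
    unfolding similar_mat_def by blast
  then have "char_poly (adjoint_cmat B * B) = char_poly (adjoint_cmat A * A)"
    by (rule char_poly_similar)
  then show ?thesis
    using sv B sym_B by (simp add: feasible_def has_singular_values_def B_def n_def)
qed

lemma one_plus_smult_idempotent_mult: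
  fixes P :: "complex mat"
  assumes P: "P \<in> carrier_mat n n" and idem: "P * P = P"
  shows "(1\<^sub>m n + a \<cdot>\<^sub>m P) * (1\<^sub>m n + b \<cdot>\<^sub>m P) = 1\<^sub>m n + (a + b + a * b) \<cdot>\<^sub>m P"
proof -
  have "(1\<^sub>m n + a \<cdot>\<^sub>m P) * (1\<^sub>m n + b \<cdot>\<^sub>m P) = 1\<^sub>m n + a \<cdot>\<^sub>m P + b \<cdot>\<^sub>m (P + a \<cdot>\<^sub>m (P * P))"
    using P by (simp add: add_mult_distrib_mat[of _ n n _ _ n] mult_add_distrib_mat[of _ n n _ n]
        mult_smult_distrib[of _ n n _ n] mult_smult_assoc_mat[of _ n n _ n])
  then show ?thesis using P by (auto simp: idem algebra_simps intro!: eq_matI)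
qed

lemma unitary_one_plus_smult_projection:
  assumes P: "P \<in> carrier_mat n n" and idem: "P * P = P" and herm: "adjoint_cmat P = P"
    and u: "u + cnj u + u * cnj u = 0"
  shows "adjoint_cmat (1\<^sub>m n + u \<cdot>\<^sub>m P) * (1\<^sub>m n + u \<cdot>\<^sub>m P) = 1\<^sub>m n"
    and "(1\<^sub>m n + u \<cdot>\<^sub>m P) * adjoint_cmat (1\<^sub>m n + u \<cdot>\<^sub>m P) = 1\<^sub>m n"
proof -
  have "cnj (P $$ (j, i)) = P $$ (i, j)" if "i < n" "j < n" for i j
    using arg_cong[OF herm, of "\<lambda>X. X $$ (i, j)"] that P by (simp add: adjoint_cmat_def)
  then have adj: "adjoint_cmat (1\<^sub>m n + u \<cdot>\<^sub>m P) = 1\<^sub>m n + cnj u \<cdot>\<^sub>m P"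
    using P by (intro eq_matI) (auto simp: adjoint_cmat_def)
  have one: "1\<^sub>m n + 0 \<cdot>\<^sub>m P = 1\<^sub>m n"
    using P by (intro eq_matI) auto
  show "adjoint_cmat (1\<^sub>m n + u \<cdot>\<^sub>m P) * (1\<^sub>m n + u \<cdot>\<^sub>m P) = 1\<^sub>m n"
    "(1\<^sub>m n + u \<cdot>\<^sub>m P) * adjoint_cmat (1\<^sub>m n + u \<cdot>\<^sub>m P) = 1\<^sub>m n"
    unfolding adj one_plus_smult_idempotent_mult[OF P idem] using u one
    by (simp_all add: algebra_simps)
qed

lemma one_plus_smult_congruence:
  fixes P A :: "complex mat"
  assumes P: "P \<in> carrier_mat n n" and A: "A \<in> carrier_mat n n"
  shows "(1\<^sub>m n + u \<cdot>\<^sub>m P) * A * transpose_mat (1\<^sub>m n + u \<cdot>\<^sub>m P)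
    = A + u \<cdot>\<^sub>m ((P * A + A * transpose_mat P) + u \<cdot>\<^sub>m (P * A * transpose_mat P))"
proof -
  have "transpose_mat (1\<^sub>m n + u \<cdot>\<^sub>m P) = 1\<^sub>m n + u \<cdot>\<^sub>m transpose_mat P"
    using P by (intro eq_matI) auto
  moreover have "(1\<^sub>m n + u \<cdot>\<^sub>m P) * A = A + u \<cdot>\<^sub>m (P * A)"
    using P A by (simp add: add_mult_distrib_mat[of _ n n _ _ n] mult_smult_assoc_mat[of _ n n _ n]
        left_mult_one_mat[of _ n n])
  moreover have "(A + u \<cdot>\<^sub>m (P * A)) * (1\<^sub>m n + u \<cdot>\<^sub>m transpose_mat P)
      = A + u \<cdot>\<^sub>m (A * transpose_mat P) + (u \<cdot>\<^sub>m (P * A) + (u * u) \<cdot>\<^sub>m (P * A * transpose_mat P))"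
    using P A by (simp add: add_mult_distrib_mat[of _ n n _ _ n] mult_add_distrib_mat[of _ n n _ n]
        mult_smult_distrib[of _ n n _ n] mult_smult_assoc_mat[of _ n n _ n])
      (auto intro!: eq_matI simp: algebra_simps)
  ultimately show ?thesis
    using P A by (auto intro!: eq_matI simp: algebra_simps)
qed

section \<open>First-order condition at a local minimiser\<close>

lemma ptrans2_form_first_variation:
  assumes A: "A \<in> carrier_mat (d1 * d2) (d1 * d2)" and sym: "transpose_mat A = A"
    and P: "P \<in> carrier_mat (d1 * d2) (d1 * d2)"
  shows "ptrans2_form d1 d2 (P * A + A * transpose_mat P) A
    = 2 * cmtrace (P * (A * ptrans2 d1 d2 (conj_mat A)))"
proof -
  define n where "n = d1 * d2"
  define K where "K = ptrans2 d1 d2 (conj_mat A)"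
  have A: "A \<in> carrier_mat n n" and P: "P \<in> carrier_mat n n" and K: "K \<in> carrier_mat n n"
    using A P by (simp_all add: n_def K_def ptrans2_carrier)
  have sym_K: "transpose_mat K = K"
    using A by (simp add: K_def n_def transpose_ptrans2 conj_mat_transpose[symmetric] sym)
  have "cmtrace (A * transpose_mat P * K) = cmtrace (transpose_mat (A * transpose_mat P * K))"
    using A P K by (simp add: cmtrace_transpose[of _ n])
  also have "\<dots> = cmtrace (K * (P * A))"
    using A P K by (simp add: transpose_mult[of _ n n _ n] sym sym_K)
  also have "\<dots> = cmtrace (P * (A * K))"
    using A P K by (simp add: cmtrace_mult_commute[of K n])
  finally have "cmtrace (A * transpose_mat P * K) = cmtrace (P * (A * K))" .
  then show ?thesis
    using A P K by (simp add: ptrans2_form_def K_def[symmetric] add_mult_distrib_mat[of _ n n _ _ n]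
        cmtrace_add[of _ n])
qed

lemma mat_dist_perturbation_le:
  fixes A E F :: "complex mat"
  assumes A: "A \<in> carrier_mat n n" and E: "E \<in> carrier_mat n n" and F: "F \<in> carrier_mat n n"
  obtains W where "0 \<le> W"
    and "\<And>u. cmod u \<le> 2 \<Longrightarrow> mat_dist A (A + u \<cdot>\<^sub>m (E + u \<cdot>\<^sub>m F)) \<le> cmod u * W"
proof -
  define W where "W = sqrt (\<Sum>i<n. \<Sum>j<n. (cmod (E $$ (i, j)) + 2 * cmod (F $$ (i, j)))\<^sup>2)"
  show thesis
  proof (rule that[of W])
    show "0 \<le> W" by (simp add: W_def sum_nonneg)
    fix u :: complex assume u: "cmod u \<le> 2"
    have entry: "(cmod (A $$ (i, j) - (A + u \<cdot>\<^sub>m (E + u \<cdot>\<^sub>m F)) $$ (i, j)))\<^sup>2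
        \<le> (cmod u)\<^sup>2 * (cmod (E $$ (i, j)) + 2 * cmod (F $$ (i, j)))\<^sup>2" if "i < n" "j < n" for i j
    proof -
      have "cmod (u * F $$ (i, j)) \<le> 2 * cmod (F $$ (i, j))"
        using u by (simp add: norm_mult mult_right_mono)
      then have "cmod (E $$ (i, j) + u * F $$ (i, j)) \<le> cmod (E $$ (i, j)) + 2 * cmod (F $$ (i, j))"
        using norm_triangle_ineq[of "E $$ (i, j)" "u * F $$ (i, j)"] by linarith
      then have "cmod u * cmod (E $$ (i, j) + u * F $$ (i, j))
          \<le> cmod u * (cmod (E $$ (i, j)) + 2 * cmod (F $$ (i, j)))"
        by (rule mult_left_mono) simp
      then show ?thesis
        using that A E F by (simp add: norm_mult power_mult_distrib[symmetric] power_mono)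
    qed
    have "mat_dist A (A + u \<cdot>\<^sub>m (E + u \<cdot>\<^sub>m F))
        \<le> sqrt ((cmod u)\<^sup>2 * (\<Sum>i<n. \<Sum>j<n. (cmod (E $$ (i, j)) + 2 * cmod (F $$ (i, j)))\<^sup>2))"
      unfolding mat_dist_def sum_distrib_left using A entry
      by (auto intro!: real_sqrt_le_mono sum_mono)
    then show "mat_dist A (A + u \<cdot>\<^sub>m (E + u \<cdot>\<^sub>m F)) \<le> cmod u * W"
      by (simp add: W_def real_sqrt_mult)
  qed
qed

lemma Im_zero_if_local_minimizer_along_curve:
  fixes B :: "real \<Rightarrow> complex mat" and z :: complex and W C :: real
  assumes lm: "local_minimizer d1 d2 \<sigma> A" and n: "d1 * d2 \<noteq> 0"
    and feasible: "\<And>t. feasible d1 d2 \<sigma> (B t)"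
    and W: "0 \<le> W" "\<And>t. \<bar>t\<bar> < 1 \<Longrightarrow> mat_dist A (B t) \<le> \<bar>t\<bar> * W"
    and C: "\<And>t. \<bar>t\<bar> < 1 \<Longrightarrow> \<bar>Re (ptrans2_form d1 d2 (B t) (B t)) - Re (ptrans2_form d1 d2 A A)
      - 2 * Re (cayley_step t * z)\<bar> \<le> (cmod (cayley_step t))\<^sup>2 * C"
  shows "Im z = 0"
proof -
  obtain \<epsilon> where \<epsilon>: "0 < \<epsilon>"
    and min: "\<And>B. feasible d1 d2 \<sigma> B \<Longrightarrow> mat_dist A B < \<epsilon> \<Longrightarrow> objective d1 d2 A \<le> objective d1 d2 B"
    using lm unfolding local_minimizer_def by blast
  define d where "d = min 1 (\<epsilon> / (W + 1))"
  show ?thesis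
  proof (rule Im_zero_if_cayley_variation_nonneg[of d z
        "\<lambda>t. Re (ptrans2_form d1 d2 (B t) (B t)) - Re (ptrans2_form d1 d2 A A)
          - 2 * Re (cayley_step t * z)" C])
    show "0 < d" using \<epsilon> W(1) by (simp add: d_def)
  next
    fix t :: real assume "\<bar>t\<bar> < d"
    then have t: "\<bar>t\<bar> < 1" "\<bar>t\<bar> * (W + 1) < \<epsilon>"
      using W(1) by (simp_all add: d_def pos_less_divide_eq)
    then show "\<bar>Re (ptrans2_form d1 d2 (B t) (B t)) - Re (ptrans2_form d1 d2 A A)
        - 2 * Re (cayley_step t * z)\<bar> \<le> (cmod (cayley_step t))\<^sup>2 * C"
      using C by simp
    have "mat_dist A (B t) < \<epsilon>"
      using W(2)[OF t(1)] t(2) by (simp add: algebra_simps)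
    then have "objective d1 d2 A \<le> objective d1 d2 (B t)"
      using min feasible by blast
    then show "0 \<le> 2 * Re (cayley_step t * z) + (Re (ptrans2_form d1 d2 (B t) (B t))
        - Re (ptrans2_form d1 d2 A A) - 2 * Re (cayley_step t * z))"
      using n by (simp add: objective_eq_ptrans2_form divide_le_cancel)
  qed
qed

lemma local_minimizer_Im_trace_projection:
  assumes lm: "local_minimizer d1 d2 \<sigma> A"
    and P: "P \<in> carrier_mat (d1 * d2) (d1 * d2)" and idem: "P * P = P" and herm: "adjoint_cmat P = P"
  shows "Im (cmtrace (P * (A * ptrans2 d1 d2 (conj_mat A)))) = 0"
proof (cases "d1 * d2 = 0")
  case True
  then show ?thesis using P by (simp add: cmtrace_def True)
next
  case False
  have feasible: "feasible d1 d2 \<sigma> A" using lm by (simp add: local_minimizer_def)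
  then have A: "A \<in> carrier_mat (d1 * d2) (d1 * d2)" and sym: "transpose_mat A = A"
    by (simp_all add: feasible_def)
  define E where "E = P * A + A * transpose_mat P"
  define F where "F = P * A * transpose_mat P"
  have E: "E \<in> carrier_mat (d1 * d2) (d1 * d2)" and F: "F \<in> carrier_mat (d1 * d2) (d1 * d2)"
    using A P by (simp_all add: E_def F_def)
  define B where "B t = A + cayley_step t \<cdot>\<^sub>m (E + cayley_step t \<cdot>\<^sub>m F)" for t
  obtain W where W: "0 \<le> W"
    "\<And>u. cmod u \<le> 2 \<Longrightarrow> mat_dist A (A + u \<cdot>\<^sub>m (E + u \<cdot>\<^sub>m F)) \<le> cmod u * W"
    using mat_dist_perturbation_le[OF A E F] by metis
  obtain C where C: "\<And>u. cmod u \<le> 2 \<Longrightarrow>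
    \<bar>Re (ptrans2_form d1 d2 (A + u \<cdot>\<^sub>m (E + u \<cdot>\<^sub>m F)) (A + u \<cdot>\<^sub>m (E + u \<cdot>\<^sub>m F)))
      - Re (ptrans2_form d1 d2 A A) - 2 * Re (u * ptrans2_form d1 d2 E A)\<bar> \<le> (cmod u)\<^sup>2 * C"
    using ptrans2_form_second_order[OF A E F] by metis
  have u: "cmod (cayley_step t) \<le> 2" if "\<bar>t\<bar> < 1" for t
    using cmod_cayley_step_le[of t] that by simp
  have "Im (ptrans2_form d1 d2 E A) = 0"
  proof (rule Im_zero_if_local_minimizer_along_curve[OF lm False, where B = B and W = "2 * W"])
    show "feasible d1 d2 \<sigma> (B t)" for t
    proof -
      let ?U = "1\<^sub>m (d1 * d2) + cayley_step t \<cdot>\<^sub>m P"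
      have "feasible d1 d2 \<sigma> (?U * A * transpose_mat ?U)"
        using unitary_one_plus_smult_projection[OF P idem herm cayley_step_unimodular] P feasible
        by (intro feasible_unitary_congruence) simp_all
      then show ?thesis by (simp add: one_plus_smult_congruence[OF P A] B_def E_def F_def)
    qed
  next
    fix t :: real assume t: "\<bar>t\<bar> < 1"
    show "\<bar>Re (ptrans2_form d1 d2 (B t) (B t)) - Re (ptrans2_form d1 d2 A A)
        - 2 * Re (cayley_step t * ptrans2_form d1 d2 E A)\<bar> \<le> (cmod (cayley_step t))\<^sup>2 * C"
      using C[OF u[OF t]] by (simp add: B_def)
  next
    fix t :: real assume t: "\<bar>t\<bar> < 1"
    have "mat_dist A (B t) \<le> cmod (cayley_step t) * W" using W(2)[OF u[OF t]] by (simp add: B_def)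
    also have "\<dots> \<le> 2 * \<bar>t\<bar> * W" by (rule mult_right_mono[OF cmod_cayley_step_le W(1)])
    finally show "mat_dist A (B t) \<le> \<bar>t\<bar> * (2 * W)" by (simp add: algebra_simps)
  qed (use W(1) in simp)
  then show ?thesis
    using ptrans2_form_first_variation[OF A sym P] unfolding E_def by simp
qed

section \<open>Hermitian matrices and rank-one projections\<close>

definition rank_one_projection :: "nat \<Rightarrow> (nat \<Rightarrow> complex) \<Rightarrow> complex mat" where
  "rank_one_projection n v =
    mat n n (\<lambda>(i, j). v i * cnj (v j) / complex_of_real (\<Sum>k<n. (cmod (v k))\<^sup>2))"

lemma rank_one_projection_carrier: "rank_one_projection n v \<in> carrier_mat n n"
  by (simp add: rank_one_projection_def)

lemma rank_one_projection_hermitian: "adjoint_cmat (rank_one_projection n v) = rank_one_projection n v"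
  unfolding adjoint_cmat_def by (rule eq_matI) (auto simp: rank_one_projection_def)

lemma rank_one_projection_idempotent:
  assumes "0 < (\<Sum>k<n. (cmod (v k))\<^sup>2)"
  shows "rank_one_projection n v * rank_one_projection n v = rank_one_projection n v"
proof (rule eq_matI)
  define S where "S = complex_of_real (\<Sum>k<n. (cmod (v k))\<^sup>2)"
  have S: "S \<noteq> 0" using assms unfolding S_def of_real_eq_0_iff by simp
  have S_eq: "S = (\<Sum>k<n. v k * cnj (v k))"
    unfolding S_def of_real_sum by (rule sum.cong[OF refl complex_norm_square])
  fix i j assume "i < dim_row (rank_one_projection n v)" "j < dim_col (rank_one_projection n v)"
  then have ij: "i < n" "j < n" by (simp_all add: rank_one_projection_def)
  have "(rank_one_projection n v * rank_one_projection n v) $$ (i, j)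
      = (\<Sum>k<n. (v i * cnj (v k) / S) * (v k * cnj (v j) / S))"
    using ij by (simp add: rank_one_projection_def scalar_prod_def S_def atLeast0LessThan)
  also have "\<dots> = v i * cnj (v j) / (S * S) * (\<Sum>k<n. v k * cnj (v k))"
    by (simp add: sum_distrib_left sum_divide_distrib field_simps)
  also have "\<dots> = v i * cnj (v j) / S"
    unfolding S_eq[symmetric] using S by (simp add: field_simps)
  also have "\<dots> = rank_one_projection n v $$ (i, j)"
    using ij by (simp add: rank_one_projection_def S_def)
  finally show "(rank_one_projection n v * rank_one_projection n v) $$ (i, j)
      = rank_one_projection n v $$ (i, j)" .
qed (simp_all add: rank_one_projection_def)

lemma cmtrace_rank_one_projection_mult:
  assumes "M \<in> carrier_mat n n"
  shows "cmtrace (rank_one_projection n v * M)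
    = (\<Sum>i<n. \<Sum>k<n. v i * cnj (v k) * M $$ (k, i)) / complex_of_real (\<Sum>k<n. (cmod (v k))\<^sup>2)"
  unfolding cmtrace_def using assms
  by (simp add: rank_one_projection_def scalar_prod_def atLeast0LessThan sum_divide_distrib)

lemma sum_lessThan_two_points:
  fixes f :: "nat \<Rightarrow> 'a :: comm_monoid_add"
  assumes "p < n" "q < n" "p \<noteq> q" "\<And>k. k \<noteq> p \<Longrightarrow> k \<noteq> q \<Longrightarrow> f k = 0"
  shows "(\<Sum>k<n. f k) = f p + f q"
proof -
  have "(\<Sum>k<n. f k) = (\<Sum>k\<in>{p, q}. f k)" using assms by (intro sum.mono_neutral_right) auto
  then show ?thesis using assms(3) by simp
qed

lemma hermitian_if_Im_quadratic_form_zero: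
  fixes M :: "complex mat"
  assumes M: "M \<in> carrier_mat n n"
    and real: "\<And>v. 0 < (\<Sum>k<n. (cmod (v k))\<^sup>2) \<Longrightarrow>
      Im (\<Sum>i<n. \<Sum>k<n. v i * cnj (v k) * M $$ (k, i)) = 0"
  shows "hermitian_cmat M"
proof -
  have diag: "Im (M $$ (p, p)) = 0" if p: "p < n" for p
  proof -
    define v :: "nat \<Rightarrow> complex" where "v k = (if k = p then 1 else 0)" for k
    have "(\<Sum>k<n. (cmod (v k))\<^sup>2) = 1"
      and "(\<Sum>i<n. \<Sum>k<n. v i * cnj (v k) * M $$ (k, i)) = M $$ (p, p)"
      using p by (simp_all add: v_def if_distrib[of cmod] if_distrib[of "\<lambda>x. x\<^sup>2"] if_distrib[of cnj]
          if_distrib[of "\<lambda>x. x * _"] if_distrib[of "\<lambda>x. _ * x"] cong: if_cong)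
    then show ?thesis using real[of v] by simp
  qed
  have off_diag: "cnj (M $$ (q, p)) = M $$ (p, q)" if pq: "p < n" "q < n" "p \<noteq> q" for p q
  proof -
    have two_point:
      "Im (M $$ (p, p) + w * M $$ (p, q) + cnj w * M $$ (q, p) + w * cnj w * M $$ (q, q)) = 0" for w
    proof -
      define v :: "nat \<Rightarrow> complex" where "v k = (if k = p then 1 else if k = q then w else 0)" for k
      have "(\<Sum>k<n. (cmod (v k))\<^sup>2) = 1 + (cmod w)\<^sup>2"
        and "(\<Sum>i<n. \<Sum>k<n. v i * cnj (v k) * M $$ (k, i))
          = M $$ (p, p) + w * M $$ (p, q) + cnj w * M $$ (q, p) + w * cnj w * M $$ (q, q)"
        using pq by (simp_all add: v_def sum_lessThan_two_points[OF pq] algebra_simps)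
      moreover have "0 < 1 + (cmod w)\<^sup>2" by (simp add: add_pos_nonneg)
      ultimately show ?thesis using real[of v] by simp
    qed
    have "Im (M $$ (q, p)) + Im (M $$ (p, q)) = 0"
      using two_point[of 1] diag pq by simp
    moreover have "Re (M $$ (p, q)) - Re (M $$ (q, p)) = 0"
      using two_point[of \<i>] diag pq by (simp add: algebra_simps)
    ultimately show ?thesis by (simp add: complex_eq_iff)
  qed
  show ?thesis
    unfolding hermitian_cmat_def adjoint_cmat_def
  proof (rule eq_matI)
    fix i j assume "i < dim_row M" "j < dim_col M"
    then have ij: "i < n" "j < n" using M by auto
    show "conj_mat (transpose_mat M) $$ (i, j) = M $$ (i, j)"
    proof (cases "i = j")
      case True
      then show ?thesis using ij M diag[of i] by (simp add: complex_eq_iff)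
    next
      case False
      then show ?thesis using ij M off_diag[of i j] by simp
    qed
  qed (use M in auto)
qed

theorem proposition8:
  fixes d1 d2 :: nat and \<sigma> :: "nat \<Rightarrow> real" and A :: "complex mat"
  assumes "d1 \<ge> 3" and "odd d1" and "d2 \<ge> 1"
    and "\<forall>k<d1 * d2. \<sigma> k \<ge> 0"
    and "local_minimizer d1 d2 \<sigma> A"
  shows "hermitian_cmat (A * ptrans2 d1 d2 (conj_mat A))"
proof (rule hermitian_if_Im_quadratic_form_zero)
  have "A \<in> carrier_mat (d1 * d2) (d1 * d2)"
    using assms(5) by (simp add: local_minimizer_def feasible_def)
  then show M: "A * ptrans2 d1 d2 (conj_mat A) \<in> carrier_mat (d1 * d2) (d1 * d2)"
    by (simp add: ptrans2_carrier)
  fix v assume v: "0 < (\<Sum>k<d1 * d2. (cmod (v k))\<^sup>2)"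
  have "Im (cmtrace (rank_one_projection (d1 * d2) v * (A * ptrans2 d1 d2 (conj_mat A)))) = 0"
    using v by (intro local_minimizer_Im_trace_projection[OF assms(5)] rank_one_projection_carrier
        rank_one_projection_idempotent rank_one_projection_hermitian)
  then show
    "Im (\<Sum>i<d1 * d2. \<Sum>k<d1 * d2. v i * cnj (v k) * (A * ptrans2 d1 d2 (conj_mat A)) $$ (k, i)) = 0"
    using v by (simp add: cmtrace_rank_one_projection_mult[OF M] Im_divide_of_real)
qed

end
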